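(* Fix a task $(\mathcal{S},\mathcal{A},\_,d_0,\mathcal{R},\gamma)$. For every transition model $\mathcal{T}$ (such that all states are reachable) and every $c\in\mathbb{R}$, the level set $\{\pi\in\Pi^+ : J_{\mathcal{T}}(\pi)=c\}$ is connected.
   Context: Setting: finite $\mathcal{S}$, finite $\mathcal{A}$ with $|\mathcal{A}|>1$, $d_0\in\Delta(\mathcal{S})$, $\mathcal{R}:\mathcal{S}\times\mathcal{A}\to\mathbb{R}$, $\gamma\in[0,1)$; a task is an MDP without its transition model, and all states are assumed reachable from $d_0$ under $\mathcal{T}$. Stationary policies $\pi:\mathcal{S}\to\Delta(\mathcal{A})$ are identified with $\Delta(\mathcal{A})^{|\mathcal{S}|}\subset\mathbb{R}^{\mathcal{S}\times\mathcal{A}}$; $\Pi^+$ is the set of those with $\pi(a\mid s)>0$ for all $s,a$. $J_{\mathcal{T}}(\pi)=\mathbb{E}\big[\sum_{t\ge0}\gamma^t\mathcal{R}(s_t,a_t)\big]$ with $s_0\sim d_0$, $a_t\sim\pi(\cdot\mid s_t)$, $s_{t+1}\sim\mathcal{T}(\cdot\mid s_t,a_t)$. *)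

theory Defs
  imports "HOL-Analysis.Analysis"
begin

text \<open>Policies are functions p :: ('s * 'a) => real, i.e. elements of R^(S x A),
  with p (s,a) read as p(a | s). The topology on this function space is the
  product topology (Function_Topology), which for finite S, A is the Euclidean one.\<close>

definition is_distribution :: "('b::finite \<Rightarrow> real) \<Rightarrow> bool" where
  "is_distribution p \<longleftrightarrow> (\<forall>x. p x \<ge> 0) \<and> (\<Sum>x\<in>UNIV. p x) = 1"

definition is_transition :: "('s::finite \<Rightarrow> 'a \<Rightarrow> 's \<Rightarrow> real) \<Rightarrow> bool" where
  "is_transition T \<longleftrightarrow> (\<forall>s a. is_distribution (T s a))"

definition policies :: "('s::finite \<times> 'a::finite \<Rightarrow> real) set" where
  "policies = {p. \<forall>s. is_distribution (\<lambda>a. p (s, a))}"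

definition pos_policies :: "('s::finite \<times> 'a::finite \<Rightarrow> real) set" where
  "pos_policies = {p \<in> policies. \<forall>s a. p (s, a) > 0}"

definition all_reachable :: "('s::finite \<Rightarrow> real) \<Rightarrow> ('s \<Rightarrow> 'a::finite \<Rightarrow> 's \<Rightarrow> real) \<Rightarrow> bool" where
  "all_reachable d0 T \<longleftrightarrow>
     (\<forall>s. \<exists>s0. d0 s0 > 0 \<and> (s0, s) \<in> {(x, y). \<exists>a. T x a y > 0}\<^sup>*)"

fun state_dist :: "('s::finite \<Rightarrow> real) \<Rightarrow> ('s \<Rightarrow> 'a::finite \<Rightarrow> 's \<Rightarrow> real)
    \<Rightarrow> ('s \<times> 'a \<Rightarrow> real) \<Rightarrow> nat \<Rightarrow> 's \<Rightarrow> real" where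
  "state_dist d0 T p 0 = d0"
| "state_dist d0 T p (Suc t) =
     (\<lambda>s'. \<Sum>s\<in>UNIV. \<Sum>a\<in>UNIV. state_dist d0 T p t s * p (s, a) * T s a s')"

text \<open>J_T(p) = E[sum_t gamma^t R(s_t,a_t)] = sum_t gamma^t E[R(s_t,a_t)].\<close>
definition J :: "('s::finite \<Rightarrow> real) \<Rightarrow> ('s \<Rightarrow> 'a::finite \<Rightarrow> real) \<Rightarrow> real
    \<Rightarrow> ('s \<Rightarrow> 'a \<Rightarrow> 's \<Rightarrow> real) \<Rightarrow> ('s \<times> 'a \<Rightarrow> real) \<Rightarrow> real" where
  "J d0 R \<gamma> T p =
     (\<Sum>t. \<gamma> ^ t * (\<Sum>s\<in>UNIV. \<Sum>a\<in>UNIV. state_dist d0 T p t s * p (s, a) * R s a))"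

end

theory Submission
  imports Defs
begin

(* The return is linear in the discounted occupancy measure, J(p) = sum_(s,a) d_p(s) p(a|s) R(s,a),
   and d_p is the unique solution of the flow equation d = d0 + gamma P_p d. Given two policies
   x, y, the policy h_t obtained by normalising (1-t) d_x(s) x(a|s) + t d_y(s) y(a|s) over a
   therefore has occupancy (1-t) d_x + t d_y, so J(h_t) = (1-t) J(x) + t J(y): the path h_t
   stays in the level set. Reachability makes d_x, d_y positive when gamma > 0, so h_t is well
   defined and strictly positive; when gamma = 0 every occupancy is d0 and h_t = (1-t) x + t y. *)

definition step_dist :: "('s::finite \<Rightarrow> 'a::finite \<Rightarrow> 's \<Rightarrow> real) \<Rightarrow> ('s \<times> 'a \<Rightarrow> real)
    \<Rightarrow> ('s \<Rightarrow> real) \<Rightarrow> 's \<Rightarrow> real" where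
  "step_dist T p u s' = (\<Sum>s\<in>UNIV. \<Sum>a\<in>UNIV. u s * p (s, a) * T s a s')"

definition occupancy :: "('s::finite \<Rightarrow> real) \<Rightarrow> ('s \<Rightarrow> 'a::finite \<Rightarrow> 's \<Rightarrow> real) \<Rightarrow> real
    \<Rightarrow> ('s \<times> 'a \<Rightarrow> real) \<Rightarrow> 's \<Rightarrow> real" where
  "occupancy d0 T \<gamma> p s = (\<Sum>t. \<gamma> ^ t * state_dist d0 T p t s)"

text \<open>The weights u, v stand for the occupancies of x, y; only their ratio at each state
  matters, which lets positive weights replace occupancies that vanish.\<close>

definition mix_policy :: "('s \<Rightarrow> real) \<Rightarrow> ('s \<Rightarrow> real) \<Rightarrow> ('s \<times> 'a \<Rightarrow> real) \<Rightarrow> ('s \<times> 'a \<Rightarrow> real)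
    \<Rightarrow> real \<Rightarrow> 's \<times> 'a \<Rightarrow> real" where
  "mix_policy u v x y t =
     (\<lambda>(s, a). ((1 - t) * u s * x (s, a) + t * v s * y (s, a)) / ((1 - t) * u s + t * v s))"

lemma policy_nonneg: "p \<in> policies \<Longrightarrow> 0 \<le> p (s, a)"
  by (auto simp: policies_def is_distribution_def)

lemma policy_sum: "p \<in> policies \<Longrightarrow> (\<Sum>a\<in>UNIV. p (s, a)) = 1"
  by (auto simp: policies_def is_distribution_def)

lemma state_dist_Suc': "state_dist d0 T p (Suc t) = step_dist T p (state_dist d0 T p t)"
  by (simp add: step_dist_def fun_eq_iff)

lemma convex_comb_pos:
  fixes t u v :: real
  assumes "t \<in> {0..1}" "0 < u" "0 < v"
  shows "0 < (1 - t) * u + t * v"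
proof (cases "t = 1")
  case False
  with assms have "0 < (1 - t) * u" by simp
  moreover have "0 \<le> t * v" using assms by simp
  ultimately show ?thesis by linarith
qed (use assms in simp)

lemma mix_policy_0: "(\<And>s. 0 < u s) \<Longrightarrow> mix_policy u v x y 0 = x"
  by (auto simp: mix_policy_def fun_eq_iff less_imp_neq[symmetric])

lemma mix_policy_1: "(\<And>s. 0 < v s) \<Longrightarrow> mix_policy u v x y 1 = y"
  by (auto simp: mix_policy_def fun_eq_iff less_imp_neq[symmetric])

lemma mix_policy_in_pos_policies:
  assumes "t \<in> {0..1}" "\<And>s. 0 < u s" "\<And>s. 0 < v s"
    and x: "x \<in> pos_policies" and y: "y \<in> pos_policies"
  shows "mix_policy u v x y t \<in> pos_policies"
proof -
  have D: "0 < (1 - t) * u s + t * v s" for s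
    using assms by (intro convex_comb_pos) auto
  have "0 < (1 - t) * (u s * x (s, a)) + t * (v s * y (s, a))" for s a
    using x y assms by (intro convex_comb_pos) (auto simp: pos_policies_def)
  then have "0 < mix_policy u v x y t (s, a)" for s a
    using D[of s] by (simp add: mix_policy_def mult.assoc)
  moreover have "(\<Sum>a\<in>UNIV. mix_policy u v x y t (s, a)) = 1" for s
    using D[of s] x y
    by (simp add: mix_policy_def pos_policies_def sum_divide_distrib[symmetric] sum.distrib
        mult.assoc sum_distrib_left[symmetric] policy_sum)
  ultimately show ?thesis
    by (auto simp: pos_policies_def policies_def is_distribution_def less_imp_le)
qed

lemma path_mix_policy:
  fixes u v :: "'s \<Rightarrow> real" and x y :: "'s \<times> 'a \<Rightarrow> real"
  assumes "\<And>s. 0 < u s" "\<And>s. 0 < v s"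
  shows "path (mix_policy u v x y)"
  unfolding path_def
proof (rule continuous_on_coordinatewise_then_product)
  fix i :: "'s \<times> 'a"
  obtain s a where i: "i = (s, a)" by fastforce
  have "\<forall>t\<in>{0..1}. (1 - t) * u s + t * v s \<noteq> 0"
    using convex_comb_pos assms by (metis less_irrefl)
  then show "continuous_on {0..1} (\<lambda>t. mix_policy u v x y t i)"
    unfolding mix_policy_def i by (auto intro!: continuous_intros)
qed

lemma mix_policy_weighted:
  assumes "t \<in> {0..1}" "0 < u s" "0 < v s" and proportional: "dx s * v s = dy s * u s"
  shows "((1 - t) * dx s + t * dy s) * mix_policy u v x y t (s, a)
       = (1 - t) * dx s * x (s, a) + t * dy s * y (s, a)"
proof -
  have D: "(1 - t) * u s + t * v s \<noteq> 0"
    using convex_comb_pos assms by (metis less_irrefl)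
  have "((1 - t) * dx s + t * dy s) * ((1 - t) * u s * x (s, a) + t * v s * y (s, a))
      = ((1 - t) * dx s * x (s, a) + t * dy s * y (s, a)) * ((1 - t) * u s + t * v s)
        + (1 - t) * t * (dx s * v s - dy s * u s) * (y (s, a) - x (s, a))"
    by (simp add: algebra_simps)
  then show ?thesis
    using D proportional by (simp add: mix_policy_def field_simps)
qed

locale mdp =
  fixes d0 :: "'s::finite \<Rightarrow> real" and T :: "'s \<Rightarrow> 'a::finite \<Rightarrow> 's \<Rightarrow> real"
  assumes init_distribution: "is_distribution d0" and transition: "is_transition T"
begin

lemma transition_nonneg: "0 \<le> T s a s'"
  using transition by (auto simp: is_transition_def is_distribution_def)

lemma transition_sum: "(\<Sum>s'\<in>UNIV. T s a s') = 1"
  using transition by (auto simp: is_transition_def is_distribution_def)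

lemma step_dist_nonneg: "p \<in> policies \<Longrightarrow> (\<And>s. 0 \<le> u s) \<Longrightarrow> 0 \<le> step_dist T p u s'"
  unfolding step_dist_def
  by (intro sum_nonneg mult_nonneg_nonneg) (auto simp: policy_nonneg transition_nonneg)

lemma sum_step_dist:
  assumes "p \<in> policies"
  shows "(\<Sum>s'\<in>UNIV. step_dist T p u s') = (\<Sum>s\<in>UNIV. u s)"
proof -
  have "(\<Sum>s'\<in>UNIV. step_dist T p u s')
      = (\<Sum>s\<in>UNIV. \<Sum>a\<in>UNIV. u s * p (s, a) * (\<Sum>s'\<in>UNIV. T s a s'))"
    unfolding step_dist_def sum_distrib_left
    by (subst sum.swap) (rule sum.cong[OF refl], rule sum.swap)
  also have "\<dots> = (\<Sum>s\<in>UNIV. u s * (\<Sum>a\<in>UNIV. p (s, a)))"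
    by (simp add: transition_sum sum_distrib_left)
  finally show ?thesis
    using assms by (simp add: policy_sum)
qed

lemma sum_abs_step_dist_le:
  assumes p: "p \<in> policies"
  shows "(\<Sum>s'\<in>UNIV. \<bar>step_dist T p u s'\<bar>) \<le> (\<Sum>s\<in>UNIV. \<bar>u s\<bar>)"
proof -
  have "\<bar>step_dist T p u s'\<bar> \<le> step_dist T p (\<lambda>s. \<bar>u s\<bar>) s'" for s'
  proof -
    have "\<bar>step_dist T p u s'\<bar> \<le> (\<Sum>s\<in>UNIV. \<Sum>a\<in>UNIV. \<bar>u s * p (s, a) * T s a s'\<bar>)"
      unfolding step_dist_def by (rule order_trans[OF sum_abs sum_mono[OF sum_abs]])
    then show ?thesis
      by (simp add: step_dist_def abs_mult policy_nonneg[OF p] transition_nonneg)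
  qed
  then have "(\<Sum>s'\<in>UNIV. \<bar>step_dist T p u s'\<bar>) \<le> (\<Sum>s'\<in>UNIV. step_dist T p (\<lambda>s. \<bar>u s\<bar>) s')"
    by (rule sum_mono)
  then show ?thesis
    by (simp add: sum_step_dist[OF p])
qed

lemma step_dist_diff: "step_dist T p (\<lambda>s. u s - v s) s' = step_dist T p u s' - step_dist T p v s'"
  by (simp add: step_dist_def algebra_simps sum_subtractf)

lemma step_dist_pos:
  assumes p: "p \<in> pos_policies" and "\<And>s. 0 \<le> u s" "0 < u s" "0 < T s a s'"
  shows "0 < step_dist T p u s'"
proof -
  have p': "p \<in> policies" and "0 < p (s, a)"
    using p by (auto simp: pos_policies_def)
  then have "0 < u s * p (s, a) * T s a s'"
    using assms by simp
  also have "\<dots> \<le> (\<Sum>a\<in>UNIV. u s * p (s, a) * T s a s')"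
    by (rule member_le_sum) (auto simp: assms policy_nonneg[OF p'] transition_nonneg)
  also have "\<dots> \<le> step_dist T p u s'"
    unfolding step_dist_def
    by (rule member_le_sum[where f = "\<lambda>s. \<Sum>a\<in>UNIV. u s * p (s, a) * T s a s'"])
       (auto intro!: sum_nonneg simp: assms policy_nonneg[OF p'] transition_nonneg)
  finally show ?thesis .
qed

lemma state_dist_nonneg: "p \<in> policies \<Longrightarrow> 0 \<le> state_dist d0 T p t s"
proof (induction t arbitrary: s)
  case 0
  then show ?case using init_distribution by (simp add: is_distribution_def)
next
  case (Suc t)
  then show ?case by (simp only: state_dist_Suc' step_dist_nonneg)
qed

lemma state_dist_sum: "p \<in> policies \<Longrightarrow> (\<Sum>s\<in>UNIV. state_dist d0 T p t s) = 1"
proof (induction t)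
  case 0
  then show ?case using init_distribution by (simp add: is_distribution_def)
next
  case (Suc t)
  then show ?case by (simp only: state_dist_Suc' sum_step_dist)
qed

lemma state_dist_le_1: "p \<in> policies \<Longrightarrow> state_dist d0 T p t s \<le> 1"
  using member_le_sum[of s UNIV "\<lambda>s. state_dist d0 T p t s"]
  by (simp add: state_dist_nonneg state_dist_sum)

lemma reachable_state_dist_pos:
  assumes reach: "all_reachable d0 T" and p: "p \<in> pos_policies"
  shows "\<exists>t. 0 < state_dist d0 T p t s"
proof -
  have p': "p \<in> policies" using p by (simp add: pos_policies_def)
  obtain s0 where s0: "0 < d0 s0" "(s0, s) \<in> {(x, y). \<exists>a. T x a y > 0}\<^sup>*"
    using reach by (auto simp: all_reachable_def)
  from s0(2) show ?thesis
  proof (induction rule: rtrancl_induct)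
    case base
    then show ?case using s0(1) by (intro exI[of _ 0]) simp
  next
    case (step y z)
    then obtain t a where "0 < state_dist d0 T p t y" "0 < T y a z" by auto
    then have "0 < state_dist d0 T p (Suc t) z"
      unfolding state_dist_Suc' by (intro step_dist_pos[OF p] state_dist_nonneg[OF p'])
    then show ?case ..
  qed
qed

end

locale discounted_mdp = mdp d0 T
  for d0 :: "'s::finite \<Rightarrow> real" and T :: "'s \<Rightarrow> 'a::finite \<Rightarrow> 's \<Rightarrow> real" +
  fixes \<gamma> :: real
  assumes discount_nonneg: "0 \<le> \<gamma>" and discount_less_1: "\<gamma> < 1"
begin

lemma occupancy_sums:
  assumes p: "p \<in> policies"
  shows "(\<lambda>t. \<gamma> ^ t * state_dist d0 T p t s) sums occupancy d0 T \<gamma> p s"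
proof -
  have "summable (\<lambda>t. \<gamma> ^ t * state_dist d0 T p t s)"
  proof (rule summable_comparison_test')
    show "summable (\<lambda>t. \<gamma> ^ t)"
      using discount_nonneg discount_less_1 by simp
    show "norm (\<gamma> ^ t * state_dist d0 T p t s) \<le> \<gamma> ^ t" for t
      using state_dist_nonneg[OF p] state_dist_le_1[OF p] discount_nonneg
      by (simp add: abs_mult mult_left_le)
  qed
  then show ?thesis
    by (simp add: occupancy_def summable_sums)
qed

lemma occupancy_flow:
  assumes p: "p \<in> policies"
  shows "occupancy d0 T \<gamma> p s' = d0 s' + \<gamma> * step_dist T p (occupancy d0 T \<gamma> p) s'"
proof -
  define f where "f t = \<gamma> ^ t * state_dist d0 T p t s'" for t
  have "(\<lambda>t. f (Suc t)) sums (occupancy d0 T \<gamma> p s' - d0 s')"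
    using occupancy_sums[OF p, of s'] by (subst sums_Suc_iff) (simp add: f_def[abs_def])
  moreover have "(\<lambda>t. f (Suc t))
      sums (\<gamma> * (\<Sum>s\<in>UNIV. \<Sum>a\<in>UNIV. occupancy d0 T \<gamma> p s * (p (s, a) * T s a s')))"
  proof -
    have f_Suc: "f (Suc t)
        = \<gamma> * (\<Sum>s\<in>UNIV. \<Sum>a\<in>UNIV. (\<gamma> ^ t * state_dist d0 T p t s) * (p (s, a) * T s a s'))" for t
      by (simp add: f_def sum_distrib_left mult_ac)
    show ?thesis
      unfolding f_Suc by (intro sums_mult sums_sum sums_mult2 occupancy_sums p)
  qed
  ultimately have "occupancy d0 T \<gamma> p s' - d0 s'
      = \<gamma> * (\<Sum>s\<in>UNIV. \<Sum>a\<in>UNIV. occupancy d0 T \<gamma> p s * (p (s, a) * T s a s'))"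
    by (rule sums_unique2)
  then show ?thesis
    by (simp add: step_dist_def mult.assoc)
qed

lemma J_eq_occupancy:
  assumes p: "p \<in> policies"
  shows "J d0 R \<gamma> T p = (\<Sum>s\<in>UNIV. \<Sum>a\<in>UNIV. occupancy d0 T \<gamma> p s * p (s, a) * R s a)"
proof -
  have "\<gamma> ^ t * (\<Sum>s\<in>UNIV. \<Sum>a\<in>UNIV. state_dist d0 T p t s * p (s, a) * R s a)
      = (\<Sum>s\<in>UNIV. \<Sum>a\<in>UNIV. (\<gamma> ^ t * state_dist d0 T p t s) * (p (s, a) * R s a))" for t
    by (simp add: sum_distrib_left mult_ac)
  moreover have "(\<lambda>t. \<Sum>s\<in>UNIV. \<Sum>a\<in>UNIV. (\<gamma> ^ t * state_dist d0 T p t s) * (p (s, a) * R s a))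
      sums (\<Sum>s\<in>UNIV. \<Sum>a\<in>UNIV. occupancy d0 T \<gamma> p s * (p (s, a) * R s a))"
    by (intro sums_sum sums_mult2 occupancy_sums p)
  ultimately show ?thesis
    unfolding J_def by (simp add: sums_unique[symmetric] mult.assoc)
qed

text \<open>The flow equation has a unique solution because the transfer operator does not
  increase the l1-norm, so the discounted operator is a contraction.\<close>

lemma occupancy_unique:
  assumes p: "p \<in> policies"
    and flow: "\<And>s'. D s' = d0 s' + \<gamma> * step_dist T p D s'"
  shows "D = occupancy d0 T \<gamma> p"
proof -
  define u where "u = (\<lambda>s. D s - occupancy d0 T \<gamma> p s)"
  have u: "u s' = \<gamma> * step_dist T p u s'" for s'
    using flow[of s'] occupancy_flow[OF p, of s']
    by (simp add: u_def step_dist_diff algebra_simps)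
  have "(\<Sum>s\<in>UNIV. \<bar>u s\<bar>) = \<gamma> * (\<Sum>s'\<in>UNIV. \<bar>step_dist T p u s'\<bar>)"
    by (subst u) (simp add: abs_mult discount_nonneg sum_distrib_left)
  also have "\<dots> \<le> \<gamma> * (\<Sum>s\<in>UNIV. \<bar>u s\<bar>)"
    by (intro mult_left_mono sum_abs_step_dist_le p discount_nonneg)
  finally have "(\<Sum>s\<in>UNIV. \<bar>u s\<bar>) = 0"
    using discount_less_1 by (smt (verit) mult_less_cancel_right2 sum_nonneg abs_ge_zero)
  then show ?thesis
    by (simp add: u_def fun_eq_iff sum_nonneg_eq_0_iff)
qed

lemma occupancy_zero_discount: "\<gamma> = 0 \<Longrightarrow> occupancy d0 T \<gamma> p = d0"
  using powser_sums_zero[of "\<lambda>t. state_dist d0 T p t s" for s]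
  by (auto simp: occupancy_def fun_eq_iff mult.commute sums_iff)

lemma occupancy_pos:
  assumes "0 < \<gamma>" "all_reachable d0 T" and p: "p \<in> pos_policies"
  shows "0 < occupancy d0 T \<gamma> p s"
proof -
  have p': "p \<in> policies" using p by (simp add: pos_policies_def)
  obtain t where "0 < state_dist d0 T p t s"
    using reachable_state_dist_pos assms by blast
  then show ?thesis
    unfolding occupancy_def
    using assms state_dist_nonneg[OF p'] sums_summable[OF occupancy_sums[OF p']]
    by (intro suminf_pos2[where i = t]) auto
qed

lemma occupancy_mixture:
  assumes x: "x \<in> policies" and y: "y \<in> policies" and h: "h \<in> policies"
    and mix: "\<And>s a. ((1 - t) * occupancy d0 T \<gamma> x s + t * occupancy d0 T \<gamma> y s) * h (s, a)
      = (1 - t) * occupancy d0 T \<gamma> x s * x (s, a) + t * occupancy d0 T \<gamma> y s * y (s, a)"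
  shows "occupancy d0 T \<gamma> h = (\<lambda>s. (1 - t) * occupancy d0 T \<gamma> x s + t * occupancy d0 T \<gamma> y s)"
    (is "_ = ?D")
proof (rule occupancy_unique[OF h, symmetric])
  fix s'
  have "step_dist T h ?D s' = (\<Sum>s\<in>UNIV. \<Sum>a\<in>UNIV.
      ((1 - t) * occupancy d0 T \<gamma> x s * x (s, a) + t * occupancy d0 T \<gamma> y s * y (s, a)) * T s a s')"
    by (simp only: step_dist_def mix)
  also have "\<dots> = (\<Sum>s\<in>UNIV. \<Sum>a\<in>UNIV. (1 - t) * (occupancy d0 T \<gamma> x s * x (s, a) * T s a s')
      + t * (occupancy d0 T \<gamma> y s * y (s, a) * T s a s'))"
    by (intro sum.cong refl) (simp add: algebra_simps)
  also have "\<dots> = (1 - t) * step_dist T x (occupancy d0 T \<gamma> x) s'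
      + t * step_dist T y (occupancy d0 T \<gamma> y) s'"
    by (simp only: step_dist_def sum.distrib sum_distrib_left)
  finally have step: "step_dist T h ?D s' = (1 - t) * step_dist T x (occupancy d0 T \<gamma> x) s'
      + t * step_dist T y (occupancy d0 T \<gamma> y) s'" .
  show "?D s' = d0 s' + \<gamma> * step_dist T h ?D s'"
    unfolding step using occupancy_flow[OF x, of s'] occupancy_flow[OF y, of s']
    by (simp add: algebra_simps)
qed

lemma J_mixture:
  assumes x: "x \<in> policies" and y: "y \<in> policies" and h: "h \<in> policies"
    and mix: "\<And>s a. ((1 - t) * occupancy d0 T \<gamma> x s + t * occupancy d0 T \<gamma> y s) * h (s, a)
      = (1 - t) * occupancy d0 T \<gamma> x s * x (s, a) + t * occupancy d0 T \<gamma> y s * y (s, a)"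
  shows "J d0 R \<gamma> T h = (1 - t) * J d0 R \<gamma> T x + t * J d0 R \<gamma> T y"
proof -
  have "J d0 R \<gamma> T h = (\<Sum>s\<in>UNIV. \<Sum>a\<in>UNIV.
      ((1 - t) * occupancy d0 T \<gamma> x s + t * occupancy d0 T \<gamma> y s) * h (s, a) * R s a)"
    by (simp add: J_eq_occupancy[OF h] occupancy_mixture[OF x y h mix])
  also have "\<dots> = (\<Sum>s\<in>UNIV. \<Sum>a\<in>UNIV.
      ((1 - t) * occupancy d0 T \<gamma> x s * x (s, a) + t * occupancy d0 T \<gamma> y s * y (s, a)) * R s a)"
    by (simp only: mix)
  also have "\<dots> = (\<Sum>s\<in>UNIV. \<Sum>a\<in>UNIV. (1 - t) * (occupancy d0 T \<gamma> x s * x (s, a) * R s a)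
      + t * (occupancy d0 T \<gamma> y s * y (s, a) * R s a))"
    by (intro sum.cong refl) (simp add: algebra_simps)
  also have "\<dots> = (1 - t) * J d0 R \<gamma> T x + t * J d0 R \<gamma> T y"
    by (simp only: J_eq_occupancy[OF x] J_eq_occupancy[OF y] sum.distrib sum_distrib_left)
  finally show ?thesis .
qed

lemma occupancy_proportional_weights:
  assumes "all_reachable d0 T" "x \<in> pos_policies" "y \<in> pos_policies"
  obtains u v where "\<And>s. 0 < u s" "\<And>s. 0 < v s"
    "\<And>s. occupancy d0 T \<gamma> x s * v s = occupancy d0 T \<gamma> y s * u s"
proof (cases "\<gamma> = 0")
  case True
  show ?thesis
    by (rule that[of "\<lambda>_. 1" "\<lambda>_. 1"]) (simp_all add: occupancy_zero_discount[OF True])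
next
  case False
  then have "0 < \<gamma>"
    using discount_nonneg by simp
  then show ?thesis
    using that[of "occupancy d0 T \<gamma> x" "occupancy d0 T \<gamma> y"] occupancy_pos assms
    by (simp add: mult.commute)
qed

lemma path_connected_level_set:
  assumes reach: "all_reachable d0 T"
  shows "path_connected {p \<in> pos_policies. J d0 R \<gamma> T p = c}" (is "path_connected ?L")
  unfolding path_connected_def
proof (intro ballI)
  fix x y
  assume "x \<in> ?L" "y \<in> ?L"
  then have x: "x \<in> pos_policies" "J d0 R \<gamma> T x = c" and y: "y \<in> pos_policies" "J d0 R \<gamma> T y = c"
    by auto
  obtain u v where u: "\<And>s. 0 < u s" and v: "\<And>s. 0 < v s"
    and weights: "\<And>s. occupancy d0 T \<gamma> x s * v s = occupancy d0 T \<gamma> y s * u s"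
    using occupancy_proportional_weights[OF reach x(1) y(1)] by blast
  have "mix_policy u v x y t \<in> ?L" if t: "t \<in> {0..1}" for t
  proof -
    have h: "mix_policy u v x y t \<in> pos_policies"
      using mix_policy_in_pos_policies[OF t u v x(1) y(1)] .
    have mix: "((1 - t) * occupancy d0 T \<gamma> x s + t * occupancy d0 T \<gamma> y s) * mix_policy u v x y t (s, a)
        = (1 - t) * occupancy d0 T \<gamma> x s * x (s, a) + t * occupancy d0 T \<gamma> y s * y (s, a)" for s a
      by (intro mix_policy_weighted t u v weights)
    have "J d0 R \<gamma> T (mix_policy u v x y t) = (1 - t) * c + t * c"
      using J_mixture[OF _ _ _ mix] x y h by (simp add: pos_policies_def)
    with h show ?thesis
      by (simp add: algebra_simps)
  qed
  then show "\<exists>g. path g \<and> path_image g \<subseteq> ?L \<and> pathstart g = x \<and> pathfinish g = y"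
    using path_mix_policy[OF u v] mix_policy_0[OF u] mix_policy_1[OF v]
    by (intro exI[of _ "mix_policy u v x y"]) (auto simp: path_image_def pathstart_def pathfinish_def)
qed

end

theorem mainTheorem8:
  fixes d0 :: "'s::finite \<Rightarrow> real"
    and R :: "'s \<Rightarrow> 'a::finite \<Rightarrow> real"
    and \<gamma> :: real
    and T :: "'s \<Rightarrow> 'a \<Rightarrow> 's \<Rightarrow> real"
    and c :: real
  assumes "CARD('a) > 1"
    and "is_distribution d0"
    and "0 \<le> \<gamma>" and "\<gamma> < 1"
    and "is_transition T"
    and "all_reachable d0 T"
  shows "connected {p \<in> (pos_policies :: ('s \<times> 'a \<Rightarrow> real) set). J d0 R \<gamma> T p = c}"
proof -
  interpret discounted_mdp d0 T \<gamma>
    using assms by unfold_locales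
  show ?thesis
    using path_connected_level_set[OF assms(6)] by (rule path_connected_imp_connected)
qed

end
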